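(* Let $d$ and $p$ be integers with $d>p\ge 2$ and let \[ f_{d,p}(m)=\sum_{j=1}^{p}\binom{j+m-2}{j-1}\binom{d-j+m}{d-j}. \] Then every integer $k$ with $-\left\lfloor\frac{d-1}{2}\right\rfloor\le k\le -1$ is a root of $f_{d,p}$.
   Context: For an integer $a\ge 0$, $\binom{a+x}{a}$ denotes the polynomial $\prod_{i=1}^{a}(x+i)/a!$ in $x$; so $\binom{j+m-2}{j-1}=\prod_{i=0}^{j-2}(m+i)/(j-1)!$ and $\binom{d-j+m}{d-j}=\prod_{i=1}^{d-j}(m+i)/(d-j)!$. *)

theory Defs
  imports Complex_Main
begin

text \<open>Polynomial binomial (a+x choose a) = prod_{i=1..a}(x+i)/a!, for a nat a and x in a field.\<close>
definition binom_poly :: "nat \<Rightarrow> 'a::field_char_0 \<Rightarrow> 'a" where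
  "binom_poly a x = (\<Prod>i=1..a. x + of_nat i) / of_nat (fact a)"

text \<open>f_{d,p}(m) = sum_{j=1}^p binom(j+m-2, j-1) * binom(d-j+m, d-j).
  Here binom(j+m-2,j-1) is binom_poly (j-1) evaluated at m-1, i.e.
  prod_{i=0}^{j-2}(m+i)/(j-1)!.\<close>
definition f_dp :: "nat \<Rightarrow> nat \<Rightarrow> 'a::field_char_0 \<Rightarrow> 'a" where
  "f_dp d p m = (\<Sum>j=1..p. binom_poly (j - 1) (m - 1) * binom_poly (d - j) m)"

end

theory Submission
  imports Defs
begin

text \<open>At m = -n every summand of f_{d,p}(m) vanishes: for j \<le> d - n the product defining
  binom(d-j+m, d-j) contains the factor m + n, and otherwise j - 1 \<ge> n + 1 because d \<ge> 2n + 1,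
  so the product defining binom(j+m-2, j-1) contains the factor (m - 1) + (n + 1).\<close>

lemma binom_poly_neg_of_nat_eq_0:
  assumes "1 \<le> i" and "i \<le> a"
  shows "binom_poly a (- of_nat i :: 'a::field_char_0) = 0"
proof -
  have "(\<Prod>l=1..a. - of_nat i + of_nat l :: 'a) = 0"
    using assms by (intro prod_zero bexI[where x = i]) auto
  then show ?thesis by (simp add: binom_poly_def)
qed

lemma f_dp_neg_of_nat_eq_0:
  assumes "1 \<le> n" and "2 * n + 1 \<le> d"
  shows "f_dp d p (- of_nat n :: 'a::field_char_0) = 0"
  unfolding f_dp_def
proof (intro sum.neutral ballI)
  fix j assume "j \<in> {1..p}"
  show "binom_poly (j - 1) (- of_nat n - 1) * binom_poly (d - j) (- of_nat n :: 'a) = 0"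
  proof (cases "j \<le> d - n")
    case True
    then have "binom_poly (d - j) (- of_nat n :: 'a) = 0"
      using assms by (intro binom_poly_neg_of_nat_eq_0) auto
    then show ?thesis by simp
  next
    case False
    have "binom_poly (j - 1) (- of_nat (n + 1) :: 'a) = 0"
      using False assms by (intro binom_poly_neg_of_nat_eq_0) auto
    moreover have "- of_nat (n + 1) = (- of_nat n - 1 :: 'a)" by simp
    ultimately have "binom_poly (j - 1) (- of_nat n - 1 :: 'a) = 0"
      by (simp only:)
    then show ?thesis by (simp only: mult_zero_left)
  qed
qed

theorem theorem2p7:
  fixes d p :: nat and k :: int
  assumes "2 \<le> p" and "p < d"
    and "- ((int d - 1) div 2) \<le> k" and "k \<le> -1"
  shows "f_dp d p (of_int k :: real) = 0"
proof -
  define n where "n = nat (- k)"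
  have k_eq: "k = - int n" and "1 \<le> n" using assms(4) by (auto simp: n_def)
  moreover have "2 * n + 1 \<le> d" using assms(3) k_eq by linarith
  ultimately show ?thesis by (simp add: f_dp_neg_of_nat_eq_0)
qed

end
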